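(* Let $a(x,x')$ be a transition density with respect to $\mu$ on a complete separable metric state space such that $x\mapsto a(x,\cdot)$ is continuous into $L_1(\mu)$. Let $h$ be a probability density and $b\ge0$ a function with $0<\int b h\,d\mu$ and $\sup_xb(x)/\int b(x)h(x)\,d\mu(x)<\infty$, and let $g=B(h,b)$. Let $x_1,\dots,x_N$ be i.i.d. from $h$ and, conditionally on them, let $N_1,\dots,N_N$ (with $\sum_iN_i=N$) be resampling multiplicities for probabilities $\pi_i=b(x_i)/\sum_kb(x_k)$ satisfying, for all $\varepsilon>0$, $$\sup_{J\subset\{1,\dots,N\}}\mathbf P\Big[\Big|\sum_{j\in J}\Big(\frac{N_j}{N}-\pi_j\Big)\Big|>\varepsilon\ \Big|\ x_1,\dots,x_N\Big]\le c_1\exp(-c_2N\varepsilon^2)$$ for constants $c_1,c_2$. Let $E_N(g)=\frac1N\sum_iN_i\delta_{x_i}$. Then for every $\varepsilon>0$, $\mathbf P[\|A^*E_N(g)-A^*g\|_1>\varepsilon]\to0$ exponentially fast in $N$.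
   Context: $B(f,b)(x)=f(x)b(x)/\int f b\,d\mu$ (Bayes operator). $A^*f(x)=\int f(x')a(x',x)\,d\mu(x')$, extended to probability measures, so $A^*E_N(g)(x)=\frac1N\sum_iN_ia(x_i,x)$. $\|\cdot\|_1$ is the $L_1(\mu)$ norm. *)

theory Defs
  imports "HOL-Probability.Probability"
begin

definition transition_density :: "'a measure \<Rightarrow> ('a \<Rightarrow> 'a \<Rightarrow> real) \<Rightarrow> bool" where
  "transition_density M a \<longleftrightarrow>
     (\<lambda>(x, y). a x y) \<in> borel_measurable (M \<Otimes>\<^sub>M M) \<and>
     (\<forall>x y. 0 \<le> a x y) \<and>
     (\<forall>x. integrable M (a x) \<and> (\<integral>y. a x y \<partial>M) = 1)"

definition L1_continuous :: "'a::metric_space measure \<Rightarrow> ('a \<Rightarrow> 'a \<Rightarrow> real) \<Rightarrow> bool" where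
  "L1_continuous M a \<longleftrightarrow>
     (\<forall>x. \<forall>e>0. \<exists>d>0. \<forall>x'. dist x' x < d \<longrightarrow> (\<integral>y. \<bar>a x' y - a x y\<bar> \<partial>M) < e)"

definition prob_density :: "'a measure \<Rightarrow> ('a \<Rightarrow> real) \<Rightarrow> bool" where
  "prob_density M h \<longleftrightarrow>
     h \<in> borel_measurable M \<and> (\<forall>x. 0 \<le> h x) \<and> integrable M h \<and> (\<integral>x. h x \<partial>M) = 1"

definition bayes :: "'a measure \<Rightarrow> ('a \<Rightarrow> real) \<Rightarrow> ('a \<Rightarrow> real) \<Rightarrow> 'a \<Rightarrow> real" where
  "bayes M f b x = f x * b x / (\<integral>y. f y * b y \<partial>M)"

definition Astar :: "'a measure \<Rightarrow> ('a \<Rightarrow> 'a \<Rightarrow> real) \<Rightarrow> ('a \<Rightarrow> real) \<Rightarrow> 'a \<Rightarrow> real" where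
  "Astar M a f x = (\<integral>x'. f x' * a x' x \<partial>M)"

text \<open>A* applied to the empirical measure (1/N) sum_i N_i delta_{x_i},
  points xs 0..N-1, multiplicities n 0..N-1.\<close>
definition Astar_emp :: "('a \<Rightarrow> 'a \<Rightarrow> real) \<Rightarrow> nat \<Rightarrow> (nat \<Rightarrow> 'a) \<Rightarrow> (nat \<Rightarrow> nat) \<Rightarrow> 'a \<Rightarrow> real" where
  "Astar_emp a N xs n x = (1 / real N) * (\<Sum>i<N. real (n i) * a (xs i) x)"

definition mult_space :: "nat \<Rightarrow> (nat \<Rightarrow> nat) measure" where
  "mult_space N = PiM {..<N} (\<lambda>_. count_space UNIV)"

definition sample_law :: "'a measure \<Rightarrow> ('a \<Rightarrow> real) \<Rightarrow> nat \<Rightarrow> (nat \<Rightarrow> 'a) measure" where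
  "sample_law M h N = PiM {..<N} (\<lambda>_. density M (\<lambda>x. ennreal (h x)))"

definition resample_prob :: "('a \<Rightarrow> real) \<Rightarrow> nat \<Rightarrow> (nat \<Rightarrow> 'a) \<Rightarrow> nat \<Rightarrow> real" where
  "resample_prob b N xs i = b (xs i) / (\<Sum>k<N. b (xs k))"

end

theory Submission
  imports Defs
begin

text \<open>
  Fix \<epsilon> and put \<delta> = \<epsilon>/8. Since x \<mapsto> a(x,.) is continuous into L1 and the state space is
  Lindelof, countably many balls cover it on each of which a(x,.) stays \<delta>-close to its value at
  the centre; finitely many of them, made disjoint, carry all but \<delta> of the mass of g = B(h,b).
  Freezing the kernel at the centres of these cells moves both A*E_N(g) and A*g by at most \<delta>
  in L1, so the L1 error is at most 4\<delta> plus twice the total deviation of the empirical cell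
  weights from the g-masses of the cells. A cell weight is its resampling error plus the ratio
  of the empirical means of 1_{A_k} b and of b over the i.i.d. sample; Hoeffding's inequality
  concentrates both means exponentially, the hypothesis on the N_j does the same for the
  resampling error, and a union bound over the finitely many cells finishes the proof.
\<close>

lemma integral_le_of_nn_integral_le:
  fixes f :: "'a \<Rightarrow> real"
  assumes [measurable]: "f \<in> borel_measurable M" and nonneg: "\<And>x. 0 \<le> f x"
    and le: "(\<integral>\<^sup>+x. ennreal (f x) \<partial>M) \<le> ennreal r" and "0 \<le> r"
  shows "(\<integral>x. f x \<partial>M) \<le> r"
proof -
  have "(\<integral>x. f x \<partial>M) = enn2real (\<integral>\<^sup>+x. ennreal (f x) \<partial>M)"
    using nonneg by (intro integral_eq_nn_integral) auto
  also have "\<dots> \<le> enn2real (ennreal r)"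
    using le by (intro enn2real_mono) auto
  finally show ?thesis using \<open>0 \<le> r\<close> by simp
qed

lemma integrable_indicator_mult:
  fixes f :: "'a \<Rightarrow> real"
  shows "A \<in> sets M \<Longrightarrow> integrable M f \<Longrightarrow> integrable M (\<lambda>x. indicator A x * f x)"
  using integrable_real_mult_indicator[of A M f] by (simp add: mult.commute)

section \<open>Transition kernels\<close>

locale transition_kernel = sigma_finite_measure \<mu> for \<mu> :: "'a measure" +
  fixes a :: "'a \<Rightarrow> 'a \<Rightarrow> real"
  assumes transition_density: "transition_density \<mu> a"
    and space_eq_UNIV: "space \<mu> = UNIV"
begin

sublocale P: pair_sigma_finite \<mu> \<mu>
  by unfold_locales

lemma in_space[simp, measurable]: "x \<in> space \<mu>"
  by (simp add: space_eq_UNIV)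

lemma kernel_nonneg: "0 \<le> a x y"
  using transition_density by (simp add: transition_density_def)

lemma integrable_kernel: "integrable \<mu> (a x)"
  using transition_density by (simp add: transition_density_def)

lemma integral_kernel: "(\<integral>y. a x y \<partial>\<mu>) = 1"
  using transition_density by (simp add: transition_density_def)

lemma nn_integral_kernel: "(\<integral>\<^sup>+y. ennreal (a x y) \<partial>\<mu>) = 1"
  using nn_integral_eq_integral[OF integrable_kernel] kernel_nonneg integral_kernel by simp

lemma measurable_kernel[measurable (raw)]:
  assumes [measurable]: "f \<in> measurable M \<mu>" "g \<in> measurable M \<mu>"
  shows "(\<lambda>x. a (f x) (g x)) \<in> borel_measurable M"
proof -
  have "(\<lambda>x. (f x, g x)) \<in> measurable M (\<mu> \<Otimes>\<^sub>M \<mu>)"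
    by measurable
  moreover have "(\<lambda>(x, y). a x y) \<in> borel_measurable (\<mu> \<Otimes>\<^sub>M \<mu>)"
    using transition_density by (simp add: transition_density_def)
  ultimately show ?thesis
    by (auto dest: measurable_compose)
qed

lemma nn_integral_kernel_mixture:
  assumes [measurable]: "f \<in> borel_measurable \<mu>" and nonneg: "\<And>x. 0 \<le> f x"
  shows "(\<integral>\<^sup>+y. (\<integral>\<^sup>+x. ennreal (f x * a x y) \<partial>\<mu>) \<partial>\<mu>) = (\<integral>\<^sup>+x. ennreal (f x) \<partial>\<mu>)"
proof -
  have "(\<integral>\<^sup>+y. (\<integral>\<^sup>+x. ennreal (f x * a x y) \<partial>\<mu>) \<partial>\<mu>)
      = (\<integral>\<^sup>+x. (\<integral>\<^sup>+y. ennreal (f x * a x y) \<partial>\<mu>) \<partial>\<mu>)"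
    by (rule P.Fubini') measurable
  also have "\<dots> = (\<integral>\<^sup>+x. ennreal (f x) * (\<integral>\<^sup>+y. ennreal (a x y) \<partial>\<mu>) \<partial>\<mu>)"
    by (intro nn_integral_cong) (simp add: ennreal_mult nonneg kernel_nonneg nn_integral_cmult)
  finally show ?thesis
    by (simp add: nn_integral_kernel)
qed

lemma AE_integrable_kernel_mixture:
  assumes [measurable]: "g \<in> borel_measurable \<mu>" and nonneg: "\<And>x. 0 \<le> g x"
    and "integrable \<mu> g"
  shows "AE y in \<mu>. integrable \<mu> (\<lambda>x. g x * a x y)"
proof -
  have "(\<integral>\<^sup>+y. (\<integral>\<^sup>+x. ennreal (g x * a x y) \<partial>\<mu>) \<partial>\<mu>) \<noteq> \<infinity>"
    using \<open>integrable \<mu> g\<close> nonneg by (simp add: nn_integral_kernel_mixture integrable_iff_bounded)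
  then have "AE y in \<mu>. (\<integral>\<^sup>+x. ennreal (g x * a x y) \<partial>\<mu>) \<noteq> \<infinity>"
    by (intro nn_integral_PInf_AE) measurable
  then show ?thesis
    by eventually_elim
      (auto intro!: integrableI_bounded simp: abs_mult nonneg kernel_nonneg top.not_eq_extremum)
qed

end

lemma transition_kernel_of_sets_borel:
  assumes "sigma_finite_measure \<mu>" and "transition_density \<mu> a" and "sets \<mu> = sets borel"
  shows "transition_kernel \<mu> a"
  using assms sets_eq_imp_space_eq[OF assms(3)]
  by (simp add: transition_kernel_def transition_kernel_axioms_def)

section \<open>Step approximation of a transition kernel\<close>

locale partitioned_kernel = transition_kernel +
  fixes M :: nat and A :: "nat \<Rightarrow> 'a set" and s :: "nat \<Rightarrow> 'a" and \<delta> :: real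
  assumes sets_cell[measurable]: "\<And>k. A k \<in> sets \<mu>"
    and disjoint_cells: "disjoint_family_on A {..<M}"
    and kernel_close_on_cell: "\<And>k x. k < M \<Longrightarrow> x \<in> A k \<Longrightarrow> (\<integral>y. \<bar>a x y - a (s k) y\<bar> \<partial>\<mu>) \<le> \<delta>"
    and tolerance_nonneg: "0 \<le> \<delta>"
begin

definition uncovered :: "'a set" where
  "uncovered = - (\<Union>k<M. A k)"

lemma sets_uncovered[measurable]: "uncovered \<in> sets \<mu>"
proof -
  have "uncovered = space \<mu> - (\<Union>k<M. A k)"
    by (auto simp: uncovered_def)
  also have "\<dots> \<in> sets \<mu>"
    by measurable
  finally show ?thesis .
qed

lemma sum_cell_indicator:
  fixes f :: "nat \<Rightarrow> real"
  assumes "j < M" "x \<in> A j"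
  shows "(\<Sum>k<M. indicator (A k) x * f k) = f j"
proof -
  have "(\<Sum>k<M. indicator (A k) x * f k) = (\<Sum>k<M. if k = j then f j else 0)"
    using disjoint_cells assms unfolding disjoint_family_on_def
    by (intro sum.cong) (auto simp: indicator_def)
  then show ?thesis
    using assms by simp
qed

lemma sum_cell_indicator_uncovered:
  fixes f :: "nat \<Rightarrow> real"
  shows "x \<in> uncovered \<Longrightarrow> (\<Sum>k<M. indicator (A k) x * f k) = 0"
  by (auto simp: uncovered_def)

lemma cell_indicator_partition: "(\<Sum>k<M. indicator (A k) x) + indicator uncovered x = (1::real)"
  using sum_cell_indicator[of _ x "\<lambda>_. 1"] sum_cell_indicator_uncovered[of x "\<lambda>_. 1"]
  by (cases "x \<in> uncovered") (auto simp: uncovered_def)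

definition step_kernel :: "'a \<Rightarrow> 'a \<Rightarrow> real" where
  "step_kernel x y = (\<Sum>k<M. indicator (A k) x * a (s k) y) + indicator uncovered x * a x y"

lemma step_kernel_cell:
  assumes "j < M" "x \<in> A j"
  shows "step_kernel x y = a (s j) y"
proof -
  have "x \<notin> uncovered"
    using assms by (auto simp: uncovered_def)
  then show ?thesis
    unfolding step_kernel_def sum_cell_indicator[OF assms] by simp
qed

lemma step_kernel_uncovered: "x \<in> uncovered \<Longrightarrow> step_kernel x y = a x y"
  unfolding step_kernel_def by (subst sum_cell_indicator_uncovered) simp_all

lemma measurable_step_kernel[measurable (raw)]:
  assumes [measurable]: "f \<in> measurable M' \<mu>" "g \<in> measurable M' \<mu>"
  shows "(\<lambda>x. step_kernel (f x) (g x)) \<in> borel_measurable M'"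
  unfolding step_kernel_def by measurable

lemma integrable_step_kernel: "integrable \<mu> (step_kernel x)"
  unfolding step_kernel_def by (intro integrable_kernel Bochner_Integration.integrable_add
      Bochner_Integration.integrable_sum Bochner_Integration.integrable_mult_right)

lemma integrable_step_kernel_error: "integrable \<mu> (\<lambda>y. \<bar>a x y - step_kernel x y\<bar>)"
  by (intro integrable_kernel integrable_step_kernel Bochner_Integration.integrable_abs
      Bochner_Integration.integrable_diff)

lemma integral_step_kernel_error: "(\<integral>y. \<bar>a x y - step_kernel x y\<bar> \<partial>\<mu>) \<le> \<delta>"
proof (cases "x \<in> uncovered")
  case True
  then show ?thesis
    by (simp add: step_kernel_uncovered tolerance_nonneg)
next
  case False
  then obtain j where "j < M" "x \<in> A j"
    by (auto simp: uncovered_def)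
  then show ?thesis
    by (simp add: step_kernel_cell kernel_close_on_cell)
qed

lemma nn_integral_step_kernel_error:
  "(\<integral>\<^sup>+y. ennreal \<bar>a x y - step_kernel x y\<bar> \<partial>\<mu>) \<le> ennreal \<delta>"
  using integral_step_kernel_error[of x]
  by (subst nn_integral_eq_integral) (auto intro: ennreal_leI integrable_step_kernel_error)

lemma nn_integral_mixture_step_error:
  fixes c :: "nat \<Rightarrow> real"
  assumes c_nonneg: "\<And>i. 0 \<le> c i" and c_sum: "(\<Sum>i<N. c i) = 1"
  shows "(\<integral>\<^sup>+y. ennreal \<bar>(\<Sum>i<N. c i * a (xs i) y) - (\<Sum>i<N. c i * step_kernel (xs i) y)\<bar> \<partial>\<mu>)
    \<le> ennreal \<delta>"
proof -
  let ?e = "\<lambda>i y. \<bar>a (xs i) y - step_kernel (xs i) y\<bar>"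
  have "(\<integral>\<^sup>+y. ennreal \<bar>(\<Sum>i<N. c i * a (xs i) y) - (\<Sum>i<N. c i * step_kernel (xs i) y)\<bar> \<partial>\<mu>)
      \<le> (\<integral>\<^sup>+y. ennreal (\<Sum>i<N. c i * ?e i y) \<partial>\<mu>)"
  proof (intro nn_integral_mono ennreal_leI)
    fix y
    have "\<bar>(\<Sum>i<N. c i * a (xs i) y) - (\<Sum>i<N. c i * step_kernel (xs i) y)\<bar>
        = \<bar>\<Sum>i<N. c i * (a (xs i) y - step_kernel (xs i) y)\<bar>"
      by (simp add: sum_subtractf right_diff_distrib)
    also have "\<dots> \<le> (\<Sum>i<N. c i * ?e i y)"
      by (rule order_trans[OF sum_abs]) (simp add: abs_mult c_nonneg)
    finally show "\<bar>(\<Sum>i<N. c i * a (xs i) y) - (\<Sum>i<N. c i * step_kernel (xs i) y)\<bar>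
        \<le> (\<Sum>i<N. c i * ?e i y)" .
  qed
  also have "\<dots> = ennreal (\<integral>y. (\<Sum>i<N. c i * ?e i y) \<partial>\<mu>)"
    by (intro nn_integral_eq_integral AE_I2 sum_nonneg mult_nonneg_nonneg c_nonneg abs_ge_zero
        Bochner_Integration.integrable_sum Bochner_Integration.integrable_mult_right
        integrable_step_kernel_error)
  also have "\<dots> = ennreal (\<Sum>i<N. c i * (\<integral>y. ?e i y \<partial>\<mu>))"
    by (simp add: integrable_step_kernel_error)
  also have "\<dots> \<le> ennreal (\<Sum>i<N. c i * \<delta>)"
    by (intro ennreal_leI sum_mono mult_left_mono integral_step_kernel_error c_nonneg)
  finally show ?thesis
    by (simp add: c_sum flip: sum_distrib_right)
qed

lemma has_bochner_integral_step_kernel_mixture: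
  assumes g: "prob_density \<mu> g" and integrable: "integrable \<mu> (\<lambda>x. g x * a x y)"
  shows "has_bochner_integral \<mu> (\<lambda>x. g x * step_kernel x y)
    ((\<Sum>k<M. (\<integral>x. indicator (A k) x * g x \<partial>\<mu>) * a (s k) y)
      + (\<integral>x. indicator uncovered x * (g x * a x y) \<partial>\<mu>))"
proof -
  have "integrable \<mu> g"
    using g by (simp add: prob_density_def)
  then have "has_bochner_integral \<mu> (\<lambda>x. (\<Sum>k<M. indicator (A k) x * g x * a (s k) y)
      + indicator uncovered x * (g x * a x y))
    ((\<Sum>k<M. (\<integral>x. indicator (A k) x * g x \<partial>\<mu>) * a (s k) y)
      + (\<integral>x. indicator uncovered x * (g x * a x y) \<partial>\<mu>))"
    using integrable
    by (intro has_bochner_integral_add has_bochner_integral_sum has_bochner_integral_mult_left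
        has_bochner_integral_integrable integrable_indicator_mult) auto
  moreover have "g x * step_kernel x y = (\<Sum>k<M. indicator (A k) x * g x * a (s k) y)
      + indicator uncovered x * (g x * a x y)" for x
    unfolding step_kernel_def by (simp only: distrib_left sum_distrib_left) (simp only: mult_ac)
  ultimately show ?thesis
    by simp
qed

lemma nn_integral_density_step_error:
  assumes g: "prob_density \<mu> g"
  shows "(\<integral>\<^sup>+y. ennreal \<bar>(\<integral>x. g x * step_kernel x y \<partial>\<mu>) - Astar \<mu> a g y\<bar> \<partial>\<mu>) \<le> ennreal \<delta>"
proof -
  have g_measurable[measurable]: "g \<in> borel_measurable \<mu>" and g_nonneg: "\<And>x. 0 \<le> g x"
    and "integrable \<mu> g" and "(\<integral>x. g x \<partial>\<mu>) = 1"
    using g by (auto simp: prob_density_def)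
  have "AE y in \<mu>. ennreal \<bar>(\<integral>x. g x * step_kernel x y \<partial>\<mu>) - Astar \<mu> a g y\<bar>
      \<le> (\<integral>\<^sup>+x. ennreal (g x * \<bar>a x y - step_kernel x y\<bar>) \<partial>\<mu>)"
    using AE_integrable_kernel_mixture[OF g_measurable g_nonneg \<open>integrable \<mu> g\<close>]
  proof eventually_elim
    case (elim y)
    then have "integrable \<mu> (\<lambda>x. g x * step_kernel x y)"
      using has_bochner_integral_step_kernel_mixture[OF g] by (auto intro: integrable.intros)
    then have integrable_diff: "integrable \<mu> (\<lambda>x. g x * (step_kernel x y - a x y))"
      using elim by (simp add: right_diff_distrib)
    have "(\<integral>x. g x * step_kernel x y \<partial>\<mu>) - Astar \<mu> a g y
        = (\<integral>x. g x * (step_kernel x y - a x y) \<partial>\<mu>)"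
      using elim \<open>integrable \<mu> (\<lambda>x. g x * step_kernel x y)\<close>
      by (simp add: Astar_def right_diff_distrib)
    also have "ennreal \<bar>\<dots>\<bar> \<le> (\<integral>\<^sup>+x. ennreal \<bar>g x * (step_kernel x y - a x y)\<bar> \<partial>\<mu>)"
      using integral_norm_bound_ennreal[OF integrable_diff] by simp
    finally show ?case
      by (simp add: abs_mult g_nonneg abs_minus_commute)
  qed
  then have "(\<integral>\<^sup>+y. ennreal \<bar>(\<integral>x. g x * step_kernel x y \<partial>\<mu>) - Astar \<mu> a g y\<bar> \<partial>\<mu>)
      \<le> (\<integral>\<^sup>+y. (\<integral>\<^sup>+x. ennreal (g x * \<bar>a x y - step_kernel x y\<bar>) \<partial>\<mu>) \<partial>\<mu>)"
    by (rule nn_integral_mono_AE)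
  also have "\<dots> = (\<integral>\<^sup>+x. (\<integral>\<^sup>+y. ennreal (g x * \<bar>a x y - step_kernel x y\<bar>) \<partial>\<mu>) \<partial>\<mu>)"
    by (rule P.Fubini') measurable
  also have "\<dots> = (\<integral>\<^sup>+x. ennreal (g x) * (\<integral>\<^sup>+y. ennreal \<bar>a x y - step_kernel x y\<bar> \<partial>\<mu>) \<partial>\<mu>)"
    by (intro nn_integral_cong) (simp add: ennreal_mult g_nonneg nn_integral_cmult)
  also have "\<dots> \<le> (\<integral>\<^sup>+x. ennreal (g x) * ennreal \<delta> \<partial>\<mu>)"
    by (intro nn_integral_mono mult_left_mono nn_integral_step_kernel_error) auto
  also have "\<dots> = ennreal \<delta>"
    using nn_integral_eq_integral[OF \<open>integrable \<mu> g\<close>] g_nonneg \<open>(\<integral>x. g x \<partial>\<mu>) = 1\<close>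
    by (simp add: nn_integral_multc)
  finally show ?thesis .
qed

lemma mixture_step_kernel_eq:
  fixes c :: "nat \<Rightarrow> real"
  shows "(\<Sum>i<N. c i * step_kernel (xs i) y)
    = (\<Sum>k<M. (\<Sum>i<N. c i * indicator (A k) (xs i)) * a (s k) y)
      + (\<Sum>i<N. c i * indicator uncovered (xs i) * a (xs i) y)"
proof -
  have "(\<Sum>i<N. c i * step_kernel (xs i) y)
      = (\<Sum>i<N. \<Sum>k<M. c i * indicator (A k) (xs i) * a (s k) y)
        + (\<Sum>i<N. c i * indicator uncovered (xs i) * a (xs i) y)"
    unfolding step_kernel_def by (simp only: distrib_left sum.distrib sum_distrib_left mult.assoc)
  also have "(\<Sum>i<N. \<Sum>k<M. c i * indicator (A k) (xs i) * a (s k) y)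
      = (\<Sum>k<M. (\<Sum>i<N. c i * indicator (A k) (xs i)) * a (s k) y)"
    by (subst sum.swap) (simp only: sum_distrib_right)
  finally show ?thesis .
qed

lemma sum_uncovered_weight:
  fixes c :: "nat \<Rightarrow> real"
  shows "(\<Sum>i<N. c i * indicator uncovered (xs i))
    = (\<Sum>i<N. c i) - (\<Sum>k<M. \<Sum>i<N. c i * indicator (A k) (xs i))"
proof -
  have "(\<Sum>i<N. c i) = (\<Sum>i<N. c i * ((\<Sum>k<M. indicator (A k) (xs i)) + indicator uncovered (xs i)))"
    by (simp only: cell_indicator_partition mult_1_right)
  also have "\<dots> = (\<Sum>i<N. \<Sum>k<M. c i * indicator (A k) (xs i)) + (\<Sum>i<N. c i * indicator uncovered (xs i))"
    by (simp only: distrib_left sum_distrib_left sum.distrib)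
  also have "(\<Sum>i<N. \<Sum>k<M. c i * indicator (A k) (xs i)) = (\<Sum>k<M. \<Sum>i<N. c i * indicator (A k) (xs i))"
    by (rule sum.swap)
  finally show ?thesis
    by simp
qed

lemma integral_uncovered_mass:
  fixes g :: "'a \<Rightarrow> real"
  assumes "integrable \<mu> g"
  shows "(\<integral>x. indicator uncovered x * g x \<partial>\<mu>)
    = (\<integral>x. g x \<partial>\<mu>) - (\<Sum>k<M. \<integral>x. indicator (A k) x * g x \<partial>\<mu>)"
proof -
  have "(\<integral>x. g x \<partial>\<mu>)
      = (\<integral>x. (\<Sum>k<M. indicator (A k) x * g x) + indicator uncovered x * g x \<partial>\<mu>)"
    by (intro Bochner_Integration.integral_cong refl)
      (simp only: sum_distrib_right[symmetric] distrib_right[symmetric] cell_indicator_partition mult_1_left)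
  also have "\<dots> = (\<integral>x. (\<Sum>k<M. indicator (A k) x * g x) \<partial>\<mu>) + (\<integral>x. indicator uncovered x * g x \<partial>\<mu>)"
    using assms by (intro Bochner_Integration.integral_add Bochner_Integration.integrable_sum
        integrable_indicator_mult sets_cell sets_uncovered)
  also have "(\<integral>x. (\<Sum>k<M. indicator (A k) x * g x) \<partial>\<mu>) = (\<Sum>k<M. \<integral>x. indicator (A k) x * g x \<partial>\<mu>)"
    using assms by (intro Bochner_Integration.integral_sum integrable_indicator_mult sets_cell)
  finally show ?thesis
    by simp
qed

lemma AE_step_mixture_density_diff_eq:
  fixes c :: "nat \<Rightarrow> real"
  assumes g: "prob_density \<mu> g"
  shows "AE y in \<mu>. (\<Sum>i<N. c i * step_kernel (xs i) y) - (\<integral>x. g x * step_kernel x y \<partial>\<mu>)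
    = (\<Sum>k<M. ((\<Sum>i<N. c i * indicator (A k) (xs i)) - (\<integral>x. indicator (A k) x * g x \<partial>\<mu>)) * a (s k) y)
      + (\<Sum>i<N. c i * indicator uncovered (xs i) * a (xs i) y)
      - (\<integral>x. indicator uncovered x * (g x * a x y) \<partial>\<mu>)"
proof -
  have "g \<in> borel_measurable \<mu>" and "\<And>x. 0 \<le> g x" and "integrable \<mu> g"
    using g by (auto simp: prob_density_def)
  from AE_integrable_kernel_mixture[OF this] show ?thesis
  proof eventually_elim
    case (elim y)
    show ?case
      using has_bochner_integral_step_kernel_mixture[OF g elim]
      by (simp add: has_bochner_integral_iff mixture_step_kernel_eq sum_subtractf left_diff_distrib)
  qed
qed

lemma nn_integral_step_mixture_density_diff:
  fixes c :: "nat \<Rightarrow> real"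
  assumes g: "prob_density \<mu> g" and c_nonneg: "\<And>i. 0 \<le> c i"
  shows "(\<integral>\<^sup>+y. ennreal \<bar>(\<Sum>i<N. c i * step_kernel (xs i) y) - (\<integral>x. g x * step_kernel x y \<partial>\<mu>)\<bar> \<partial>\<mu>)
    \<le> ennreal ((\<Sum>k<M. \<bar>(\<Sum>i<N. c i * indicator (A k) (xs i)) - (\<integral>x. indicator (A k) x * g x \<partial>\<mu>)\<bar>)
        + (\<Sum>i<N. c i * indicator uncovered (xs i)))
      + ennreal (\<integral>x. indicator uncovered x * g x \<partial>\<mu>)"
proof -
  have g_measurable[measurable]: "g \<in> borel_measurable \<mu>" and g_nonneg: "\<And>x. 0 \<le> g x"
    and "integrable \<mu> g"
    using g by (auto simp: prob_density_def)
  define \<Delta> where "\<Delta> k = (\<Sum>i<N. c i * indicator (A k) (xs i)) - (\<integral>x. indicator (A k) x * g x \<partial>\<mu>)" for k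
  define D where "D y = (\<Sum>k<M. \<bar>\<Delta> k\<bar> * a (s k) y) + (\<Sum>i<N. c i * indicator uncovered (xs i) * a (xs i) y)"
    for y
  have D_nonneg: "0 \<le> D y" for y
    unfolding D_def by (intro add_nonneg_nonneg sum_nonneg mult_nonneg_nonneg c_nonneg kernel_nonneg) auto
  have "AE y in \<mu>. ennreal \<bar>(\<Sum>i<N. c i * step_kernel (xs i) y) - (\<integral>x. g x * step_kernel x y \<partial>\<mu>)\<bar>
      \<le> ennreal (D y) + (\<integral>\<^sup>+x. ennreal (indicator uncovered x * g x * a x y) \<partial>\<mu>)"
    using AE_step_mixture_density_diff_eq[OF g, where c = c and N = N and xs = xs]
      AE_integrable_kernel_mixture[OF g_measurable g_nonneg \<open>integrable \<mu> g\<close>]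
  proof eventually_elim
    case (elim y)
    let ?r = "\<integral>x. indicator uncovered x * (g x * a x y) \<partial>\<mu>"
    have "\<bar>(\<Sum>i<N. c i * step_kernel (xs i) y) - (\<integral>x. g x * step_kernel x y \<partial>\<mu>)\<bar> \<le> D y + \<bar>?r\<bar>"
      unfolding elim(1) D_def \<Delta>_def
      by (intro order_trans[OF abs_triangle_ineq4] add_mono order_trans[OF abs_triangle_ineq]
          order_trans[OF sum_abs])
        (auto simp: abs_mult kernel_nonneg c_nonneg)
    then have "ennreal \<bar>(\<Sum>i<N. c i * step_kernel (xs i) y) - (\<integral>x. g x * step_kernel x y \<partial>\<mu>)\<bar>
        \<le> ennreal (D y) + ennreal \<bar>?r\<bar>"
      using D_nonneg by (simp flip: ennreal_plus add: ennreal_leI)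
    also have "ennreal \<bar>?r\<bar> \<le> (\<integral>\<^sup>+x. ennreal (indicator uncovered x * g x * a x y) \<partial>\<mu>)"
      using integral_norm_bound_ennreal[OF integrable_indicator_mult[OF sets_uncovered elim(2)]]
      by (simp add: abs_mult g_nonneg kernel_nonneg mult.assoc)
    finally show ?case
      by (simp add: add_mono)
  qed
  then have "(\<integral>\<^sup>+y. ennreal \<bar>(\<Sum>i<N. c i * step_kernel (xs i) y) - (\<integral>x. g x * step_kernel x y \<partial>\<mu>)\<bar> \<partial>\<mu>)
      \<le> (\<integral>\<^sup>+y. ennreal (D y) \<partial>\<mu>) + (\<integral>\<^sup>+y. (\<integral>\<^sup>+x. ennreal (indicator uncovered x * g x * a x y) \<partial>\<mu>) \<partial>\<mu>)"
    by (subst nn_integral_add[symmetric]) (auto simp: D_def intro: nn_integral_mono_AE)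
  also have "(\<integral>\<^sup>+y. ennreal (D y) \<partial>\<mu>) = ennreal (\<integral>y. D y \<partial>\<mu>)"
    unfolding D_def
    by (intro nn_integral_eq_integral AE_I2 D_nonneg[unfolded D_def] Bochner_Integration.integrable_add
        Bochner_Integration.integrable_sum Bochner_Integration.integrable_mult_right integrable_kernel)
  also have "(\<integral>y. D y \<partial>\<mu>) = (\<Sum>k<M. \<bar>\<Delta> k\<bar>) + (\<Sum>i<N. c i * indicator uncovered (xs i))"
    unfolding D_def by (simp add: integrable_kernel integral_kernel)
  also have "(\<integral>\<^sup>+y. (\<integral>\<^sup>+x. ennreal (indicator uncovered x * g x * a x y) \<partial>\<mu>) \<partial>\<mu>)
      = ennreal (\<integral>x. indicator uncovered x * g x \<partial>\<mu>)"
    by (subst nn_integral_kernel_mixture)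
      (auto simp: g_nonneg intro!: nn_integral_eq_integral integrable_indicator_mult \<open>integrable \<mu> g\<close>)
  finally show ?thesis
    by (simp add: \<Delta>_def)
qed

lemma uncovered_weights_le:
  fixes c :: "nat \<Rightarrow> real"
  assumes g: "prob_density \<mu> g" and tail: "(\<integral>x. indicator uncovered x * g x \<partial>\<mu>) \<le> \<delta>"
    and c_sum: "(\<Sum>i<N. c i) = 1"
  shows "(\<Sum>i<N. c i * indicator uncovered (xs i)) + (\<integral>x. indicator uncovered x * g x \<partial>\<mu>)
    \<le> (\<Sum>k<M. \<bar>(\<Sum>i<N. c i * indicator (A k) (xs i)) - (\<integral>x. indicator (A k) x * g x \<partial>\<mu>)\<bar>) + 2 * \<delta>"
proof -
  have "integrable \<mu> g" and "(\<integral>x. g x \<partial>\<mu>) = 1"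
    using g by (auto simp: prob_density_def)
  then have "(\<Sum>i<N. c i * indicator uncovered (xs i)) - (\<integral>x. indicator uncovered x * g x \<partial>\<mu>)
      = (\<Sum>k<M. (\<integral>x. indicator (A k) x * g x \<partial>\<mu>) - (\<Sum>i<N. c i * indicator (A k) (xs i)))"
    using sum_uncovered_weight[of c xs N] integral_uncovered_mass by (simp add: c_sum sum_subtractf)
  also have "\<dots> \<le> (\<Sum>k<M. \<bar>(\<Sum>i<N. c i * indicator (A k) (xs i)) - (\<integral>x. indicator (A k) x * g x \<partial>\<mu>)\<bar>)"
    by (intro sum_mono) auto
  finally show ?thesis
    using tail by linarith
qed

lemma L1_mixture_Astar_le:
  fixes c :: "nat \<Rightarrow> real"
  assumes g: "prob_density \<mu> g" and tail: "(\<integral>x. indicator uncovered x * g x \<partial>\<mu>) \<le> \<delta>"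
    and c_nonneg: "\<And>i. 0 \<le> c i" and c_sum: "(\<Sum>i<N. c i) = 1"
  shows "(\<integral>y. \<bar>(\<Sum>i<N. c i * a (xs i) y) - Astar \<mu> a g y\<bar> \<partial>\<mu>)
    \<le> 4 * \<delta> + 2 * (\<Sum>k<M. \<bar>(\<Sum>i<N. c i * indicator (A k) (xs i)) - (\<integral>x. indicator (A k) x * g x \<partial>\<mu>)\<bar>)"
proof -
  have [measurable]: "g \<in> borel_measurable \<mu>"
    using g by (simp add: prob_density_def)
  define cell_error where
    "cell_error = (\<Sum>k<M. \<bar>(\<Sum>i<N. c i * indicator (A k) (xs i)) - (\<integral>x. indicator (A k) x * g x \<partial>\<mu>)\<bar>)"
  define w_uncovered where "w_uncovered = (\<Sum>i<N. c i * indicator uncovered (xs i))"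
  define \<gamma>_uncovered where "\<gamma>_uncovered = (\<integral>x. indicator uncovered x * g x \<partial>\<mu>)"
  have nonneg: "0 \<le> cell_error" "0 \<le> w_uncovered" "0 \<le> \<gamma>_uncovered"
    using g unfolding cell_error_def w_uncovered_def \<gamma>_uncovered_def prob_density_def
    by (auto intro!: sum_nonneg mult_nonneg_nonneg c_nonneg integral_nonneg_AE)
  have uncovered_le: "w_uncovered + \<gamma>_uncovered \<le> cell_error + 2 * \<delta>"
    unfolding cell_error_def w_uncovered_def \<gamma>_uncovered_def by (rule uncovered_weights_le[OF g tail c_sum])
  txt \<open>Pass through the step kernel: the two outer differences cost \<delta> each,
    the middle one only sees the cell weights.\<close>
  let ?E = "\<lambda>y. \<Sum>i<N. c i * a (xs i) y"
  let ?E_step = "\<lambda>y. \<Sum>i<N. c i * step_kernel (xs i) y"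
  let ?G_step = "\<lambda>y. \<integral>x. g x * step_kernel x y \<partial>\<mu>"
  let ?G = "Astar \<mu> a g"
  have [measurable]: "?G \<in> borel_measurable \<mu>"
    unfolding Astar_def by measurable
  have "(\<integral>\<^sup>+y. ennreal \<bar>?E y - ?G y\<bar> \<partial>\<mu>)
      \<le> (\<integral>\<^sup>+y. ennreal \<bar>?E y - ?E_step y\<bar> + ennreal \<bar>?E_step y - ?G_step y\<bar>
        + ennreal \<bar>?G_step y - ?G y\<bar> \<partial>\<mu>)"
    by (intro nn_integral_mono) (simp flip: ennreal_plus add: ennreal_leI)
  also have "\<dots> = (\<integral>\<^sup>+y. ennreal \<bar>?E y - ?E_step y\<bar> \<partial>\<mu>) + (\<integral>\<^sup>+y. ennreal \<bar>?E_step y - ?G_step y\<bar> \<partial>\<mu>)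
      + (\<integral>\<^sup>+y. ennreal \<bar>?G_step y - ?G y\<bar> \<partial>\<mu>)"
    by (simp add: nn_integral_add)
  also have "\<dots> \<le> ennreal \<delta> + (ennreal (cell_error + w_uncovered) + ennreal \<gamma>_uncovered) + ennreal \<delta>"
    unfolding cell_error_def w_uncovered_def \<gamma>_uncovered_def
    by (intro add_mono nn_integral_mixture_step_error nn_integral_step_mixture_density_diff
        nn_integral_density_step_error g c_nonneg c_sum)
  also have "\<dots> = ennreal (\<delta> + (cell_error + w_uncovered + \<gamma>_uncovered) + \<delta>)"
    using nonneg tolerance_nonneg by (simp flip: ennreal_plus)
  also have "\<dots> \<le> ennreal (4 * \<delta> + 2 * cell_error)"
    using uncovered_le by (intro ennreal_leI) linarith
  finally have "(\<integral>y. \<bar>?E y - ?G y\<bar> \<partial>\<mu>) \<le> 4 * \<delta> + 2 * cell_error"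
    using nonneg tolerance_nonneg by (intro integral_le_of_nn_integral_le) auto
  then show ?thesis
    by (simp only: cell_error_def)
qed

end

section \<open>Covering the state space by cells\<close>

lemma L1_continuous_countable_cover:
  fixes a :: "'a::{metric_space, second_countable_topology} \<Rightarrow> 'a \<Rightarrow> real"
  assumes "L1_continuous \<mu> a" and "0 < \<delta>"
  obtains B :: "nat \<Rightarrow> 'a set" and e :: "nat \<Rightarrow> 'a"
  where "\<And>k. open (B k)" and "\<And>x. \<exists>k. x \<in> B k"
    and "\<And>k x. x \<in> B k \<Longrightarrow> (\<integral>y. \<bar>a x y - a (e k) y\<bar> \<partial>\<mu>) \<le> \<delta>"
proof -
  have "\<forall>x. \<exists>d>0. \<forall>x'. dist x' x < d \<longrightarrow> (\<integral>y. \<bar>a x' y - a x y\<bar> \<partial>\<mu>) < \<delta>"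
    using assms unfolding L1_continuous_def by blast
  then obtain r where r: "\<forall>x. 0 < r x \<and> (\<forall>x'. dist x' x < r x \<longrightarrow> (\<integral>y. \<bar>a x' y - a x y\<bar> \<partial>\<mu>) < \<delta>)"
    by (rule choice[THEN exE]) blast
  obtain \<F> where \<F>: "\<F> \<subseteq> range (\<lambda>x. ball x (r x))" "countable \<F>"
    and \<F>_cover: "\<Union>\<F> = (\<Union>x. ball x (r x))"
    by (rule Lindelof[of "range (\<lambda>x. ball x (r x))"]) auto
  obtain X where "countable X" and X: "\<F> = (\<lambda>x. ball x (r x)) ` X"
    using countable_subset_image[of \<F> "\<lambda>x. ball x (r x)" UNIV] \<F> by auto
  have X_cover: "(\<Union>x\<in>X. ball x (r x)) = UNIV"
    using \<F>_cover r unfolding X by force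
  then have "X \<noteq> {}"
    by auto
  define e where "e = from_nat_into X"
  have range_e: "range e = X"
    unfolding e_def using \<open>countable X\<close> \<open>X \<noteq> {}\<close> by (simp add: range_from_nat_into)
  show ?thesis
  proof
    show "\<exists>k. x \<in> ball (e k) (r (e k))" for x
    proof -
      have "x \<in> (\<Union>y\<in>range e. ball y (r y))"
        using X_cover range_e by simp
      then show ?thesis
        by blast
    qed
    show "(\<integral>y. \<bar>a x y - a (e k) y\<bar> \<partial>\<mu>) \<le> \<delta>" if "x \<in> ball (e k) (r (e k))" for k x
    proof -
      have "dist x (e k) < r (e k)"
        using that by (simp add: dist_commute)
      then show ?thesis
        using r less_imp_le by blast
    qed
  qed simp
qed

lemma exists_finite_union_tail_le:
  fixes g :: "'a \<Rightarrow> real" and B :: "nat \<Rightarrow> 'a set"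
  assumes sets_B: "\<And>k. B k \<in> sets M" and cover: "(\<Union>k. B k) = space M"
    and "integrable M g" and g_nonneg: "\<And>x. 0 \<le> g x" and "0 < \<delta>"
  obtains n where "(\<integral>x. indicator (space M - (\<Union>k<n. B k)) x * g x \<partial>M) \<le> \<delta>"
proof -
  have "(\<lambda>n. \<integral>x. indicator (space M - (\<Union>k<n. B k)) x * g x \<partial>M) \<longlonglongrightarrow> (\<integral>x. 0 \<partial>M)"
  proof (rule integral_dominated_convergence[where w = g])
    show "AE x in M. (\<lambda>n. indicator (space M - (\<Union>k<n. B k)) x * g x) \<longlonglongrightarrow> 0"
    proof (rule AE_I2)
      fix x assume "x \<in> space M"
      then obtain j where "x \<in> B j"
        using cover by auto
      then have "\<forall>n\<ge>Suc j. indicator (space M - (\<Union>k<n. B k)) x * g x = 0"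
        by (auto simp: indicator_def)
      then show "(\<lambda>n. indicator (space M - (\<Union>k<n. B k)) x * g x) \<longlonglongrightarrow> 0"
        by (intro tendsto_eventually) (auto simp: eventually_sequentially)
    qed
  qed (use sets_B \<open>integrable M g\<close> g_nonneg in \<open>auto simp: indicator_def\<close>)
  then have "eventually (\<lambda>n. (\<integral>x. indicator (space M - (\<Union>k<n. B k)) x * g x \<partial>M) < \<delta>) sequentially"
    using \<open>0 < \<delta>\<close> by (intro order_tendstoD) auto
  then obtain n where "(\<integral>x. indicator (space M - (\<Union>k<n. B k)) x * g x \<partial>M) < \<delta>"
    by (auto simp: eventually_sequentially)
  then show ?thesis
    by (intro that less_imp_le)
qed

lemma exists_kernel_partition:
  fixes \<mu> :: "'a::{metric_space, second_countable_topology} measure"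
  assumes "transition_kernel \<mu> a" and sets_eq: "sets \<mu> = sets borel" and "L1_continuous \<mu> a" and "0 < \<delta>"
    and g: "prob_density \<mu> g"
  obtains M A s where "partitioned_kernel \<mu> a M A s \<delta>"
    and "(\<integral>x. indicator (- (\<Union>k<M. A k)) x * g x \<partial>\<mu>) \<le> \<delta>"
proof -
  obtain B :: "nat \<Rightarrow> 'a set" and e :: "nat \<Rightarrow> 'a" where open_B: "\<And>k. open (B k)" and cover: "\<And>x. \<exists>k. x \<in> B k"
    and close: "\<And>k x. x \<in> B k \<Longrightarrow> (\<integral>y. \<bar>a x y - a (e k) y\<bar> \<partial>\<mu>) \<le> \<delta>"
    by (rule L1_continuous_countable_cover[OF \<open>L1_continuous \<mu> a\<close> \<open>0 < \<delta>\<close>]) (rule that)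
  have sets_B: "B k \<in> sets \<mu>" for k
    using open_B sets_eq by (simp add: borel_open)
  have space_eq: "space \<mu> = UNIV"
    using sets_eq_imp_space_eq[OF sets_eq] by simp
  have "integrable \<mu> g" and g_nonneg: "\<And>x. 0 \<le> g x"
    using g by (auto simp: prob_density_def)
  have "(\<Union>k. B k) = space \<mu>"
    using cover space_eq by auto
  then obtain M where tail: "(\<integral>x. indicator (space \<mu> - (\<Union>k<M. B k)) x * g x \<partial>\<mu>) \<le> \<delta>"
    by (rule exists_finite_union_tail_le[OF sets_B _ \<open>integrable \<mu> g\<close> g_nonneg \<open>0 < \<delta>\<close>])
  define A where "A = disjointed B"
  have cells_union: "(\<Union>k<M. A k) = (\<Union>k<M. B k)"
    using finite_UN_disjointed_eq[of B M] by (simp add: A_def atLeast0LessThan)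
  show ?thesis
  proof (rule that)
    show "partitioned_kernel \<mu> a M A e \<delta>"
    proof (intro partitioned_kernel.intro partitioned_kernel_axioms.intro)
      have "range (disjointed B) \<subseteq> sets \<mu>"
        by (rule sets.range_disjointed_sets) (use sets_B in auto)
      then show "A k \<in> sets \<mu>" for k
        unfolding A_def by blast
      show "disjoint_family_on A {..<M}"
        unfolding A_def by (rule disjoint_family_on_mono[OF subset_UNIV disjoint_family_disjointed])
      show "(\<integral>y. \<bar>a x y - a (e k) y\<bar> \<partial>\<mu>) \<le> \<delta>" if "x \<in> A k" for k x
        using close[of x k] disjointed_subset[of B k] that unfolding A_def by blast
      show "transition_kernel \<mu> a" "0 \<le> \<delta>"
        using assms(1) \<open>0 < \<delta>\<close> by simp_all
    qed
    have "- (\<Union>k<M. A k) = space \<mu> - (\<Union>k<M. B k)"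
      using cells_union space_eq by auto
    then show "(\<integral>x. indicator (- (\<Union>k<M. A k)) x * g x \<partial>\<mu>) \<le> \<delta>"
      using tail by simp
  qed
qed

section \<open>I.i.d. samples and multiplicities\<close>

lemma prob_space_density_of_prob_density:
  assumes "prob_density \<mu> h"
  shows "prob_space (density \<mu> (\<lambda>x. ennreal (h x)))"
proof
  have "emeasure (density \<mu> (\<lambda>x. ennreal (h x))) (space \<mu>) = (\<integral>\<^sup>+x. ennreal (h x) \<partial>\<mu>)"
    using assms by (simp add: prob_density_def emeasure_density)
  also have "\<dots> = 1"
    using assms nn_integral_eq_integral[of \<mu> h] by (simp add: prob_density_def)
  finally show "emeasure (density \<mu> (\<lambda>x. ennreal (h x))) (space (density \<mu> (\<lambda>x. ennreal (h x)))) = 1"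
    by simp
qed

lemma prob_space_sample_law:
  "prob_density \<mu> h \<Longrightarrow> prob_space (sample_law \<mu> h N)"
  unfolding sample_law_def by (intro prob_space_PiM prob_space_density_of_prob_density)

lemma measurable_sample_component_density:
  assumes "i < N"
  shows "(\<lambda>xs. xs i) \<in> measurable (sample_law \<mu> h N) (density \<mu> (\<lambda>x. ennreal (h x)))"
  unfolding sample_law_def using assms by (intro measurable_component_singleton) auto

lemma measurable_sample_component:
  assumes "i < N"
  shows "(\<lambda>xs. xs i) \<in> measurable (sample_law \<mu> h N) \<mu>"
  using measurable_sample_component_density[OF assms] by (simp cong: measurable_cong_sets)

lemma borel_measurable_sample_sum:
  fixes f :: "'a \<Rightarrow> real"
  assumes "f \<in> borel_measurable \<mu>"
  shows "(\<lambda>xs. \<Sum>i<N. f (xs i)) \<in> borel_measurable (sample_law \<mu> h N)"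
proof (rule borel_measurable_sum)
  fix i assume "i \<in> {..<N}"
  then show "(\<lambda>xs. f (xs i)) \<in> borel_measurable (sample_law \<mu> h N)"
    by (intro measurable_compose[OF measurable_sample_component assms]) simp
qed

lemma distr_sample_law_component:
  assumes "prob_density \<mu> h" "i < N"
  shows "distr (sample_law \<mu> h N) (density \<mu> (\<lambda>x. ennreal (h x))) (\<lambda>xs. xs i)
    = density \<mu> (\<lambda>x. ennreal (h x))"
  unfolding sample_law_def using assms
  by (intro distr_PiM_component prob_space_density_of_prob_density) auto

lemma indep_vars_sample_law:
  assumes h: "prob_density \<mu> h" and "0 < N"
  shows "prob_space.indep_vars (sample_law \<mu> h N) (\<lambda>_. density \<mu> (\<lambda>x. ennreal (h x)))
    (\<lambda>i xs. xs i) {..<N}"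
proof -
  define P where "P = density \<mu> (\<lambda>x. ennreal (h x))"
  interpret prob_space "sample_law \<mu> h N"
    by (rule prob_space_sample_law[OF h])
  have "distr (sample_law \<mu> h N) (\<Pi>\<^sub>M i\<in>{..<N}. P) (\<lambda>x. \<lambda>i\<in>{..<N}. x i)
      = distr (sample_law \<mu> h N) (sample_law \<mu> h N) (\<lambda>x. x)"
    unfolding sample_law_def P_def
    by (intro distr_cong) (auto simp: space_PiM PiE_def extensional_restrict)
  also have "\<dots> = sample_law \<mu> h N"
    by simp
  also have "\<dots> = (\<Pi>\<^sub>M i\<in>{..<N}. distr (sample_law \<mu> h N) P (\<lambda>xs. xs i))"
    unfolding sample_law_def P_def
    by (rule PiM_cong) (auto simp: distr_sample_law_component[OF h, unfolded sample_law_def])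
  finally show ?thesis
    using indep_vars_iff_distr_eq_PiM'[of "{..<N}" "\<lambda>i xs. xs i" "\<lambda>_. P"] \<open>0 < N\<close>
      measurable_sample_component_density[of _ N \<mu> h]
    unfolding P_def by auto
qed

lemma integral_sample_law_component:
  assumes h: "prob_density \<mu> h" and "i < N" and [measurable]: "f \<in> borel_measurable \<mu>"
  shows "(\<integral>xs. f (xs i) \<partial>sample_law \<mu> h N) = (\<integral>x. h x * f x \<partial>\<mu>)"
proof -
  define P where "P = density \<mu> (\<lambda>x. ennreal (h x))"
  have "f \<in> borel_measurable P"
    unfolding P_def by (simp cong: measurable_cong_sets)
  then have "(\<integral>xs. f (xs i) \<partial>sample_law \<mu> h N) = (\<integral>x. f x \<partial>distr (sample_law \<mu> h N) P (\<lambda>xs. xs i))"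
    using measurable_sample_component_density[OF \<open>i < N\<close>] unfolding P_def
    by (intro integral_distr[symmetric])
  also have "\<dots> = (\<integral>x. f x \<partial>P)"
    unfolding P_def using distr_sample_law_component[OF h \<open>i < N\<close>] by simp
  also have "\<dots> = (\<integral>x. h x * f x \<partial>\<mu>)"
    unfolding P_def using h by (subst integral_density) (auto simp: prob_density_def)
  finally show ?thesis .
qed

lemma sample_law_hoeffding:
  assumes h: "prob_density \<mu> h" and "0 < N" and f[measurable]: "f \<in> borel_measurable \<mu>"
    and f_range: "\<And>x. f x \<in> {0..B}" and "0 < B" and "0 \<le> \<eta>"
  shows "measure (sample_law \<mu> h N) {xs \<in> space (sample_law \<mu> h N).
      real N * \<eta> \<le> \<bar>(\<Sum>i<N. f (xs i)) - real N * (\<integral>x. h x * f x \<partial>\<mu>)\<bar>}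
    \<le> 2 * exp (- 2 * real N * \<eta>\<^sup>2 / B\<^sup>2)"
proof -
  interpret S: prob_space "sample_law \<mu> h N"
    by (rule prob_space_sample_law[OF h])
  have "f \<in> measurable (density \<mu> (\<lambda>x. ennreal (h x))) borel"
    by (simp cong: measurable_cong_sets)
  then have indep: "S.indep_vars (\<lambda>_. borel) (\<lambda>i xs. f (xs i)) {..<N}"
    using S.indep_vars_compose2[OF indep_vars_sample_law[OF h \<open>0 < N\<close>], of "\<lambda>_. f"] by simp
  interpret Hoeffding_ineq "sample_law \<mu> h N" "{..<N}" "\<lambda>i xs. f (xs i)" "\<lambda>_. 0" "\<lambda>_. B"
      "real N * (\<integral>x. h x * f x \<partial>\<mu>)"
    by unfold_locales (use indep f_range in \<open>simp_all add: integral_sample_law_component[OF h]\<close>)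
  have "S.prob {xs \<in> space (sample_law \<mu> h N).
      real N * \<eta> \<le> \<bar>(\<Sum>i<N. f (xs i)) - real N * (\<integral>x. h x * f x \<partial>\<mu>)\<bar>}
    \<le> 2 * exp (- 2 * (real N * \<eta>)\<^sup>2 / (\<Sum>i<N. (B - 0)\<^sup>2))"
    using \<open>0 < N\<close> \<open>0 < B\<close> \<open>0 \<le> \<eta>\<close> by (intro Hoeffding_ineq_abs_ge) auto
  also have "- 2 * (real N * \<eta>)\<^sup>2 / (\<Sum>i<N. (B - 0)\<^sup>2) = - 2 * real N * \<eta>\<^sup>2 / B\<^sup>2"
    using \<open>0 < N\<close> \<open>0 < B\<close> by (simp add: power2_eq_square field_simps)
  finally show ?thesis .
qed

lemma borel_measurable_multiplicity:
  assumes "j < N"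
  shows "(\<lambda>n. real (n j)) \<in> borel_measurable (mult_space N)"
proof -
  have "(\<lambda>n. n j) \<in> measurable (mult_space N) (count_space UNIV)"
    unfolding mult_space_def using assms by (intro measurable_component_singleton) auto
  then show ?thesis
    by (rule measurable_compose) simp
qed

lemma sets_multiplicity_deviation:
  assumes "J \<subseteq> {..<N}"
  shows "{n \<in> space (mult_space N). \<epsilon> < \<bar>\<Sum>j\<in>J. real (n j) / real N - r j\<bar>} \<in> sets (mult_space N)"
proof -
  have [measurable]: "(\<lambda>n. \<Sum>j\<in>J. real (n j) / real N - r j) \<in> borel_measurable (mult_space N)"
    using assms by (intro borel_measurable_sum borel_measurable_diff borel_measurable_divide
        borel_measurable_multiplicity borel_measurable_const) auto
  show ?thesis
    by measurable
qed

section \<open>Resampling\<close>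

lemma ratio_deviation_le:
  fixes e E \<beta> Z \<eta> :: real
  assumes "0 < Z" and "0 \<le> \<beta>" and "\<beta> \<le> Z" and e: "\<bar>e - \<beta>\<bar> < \<eta>" and E: "\<bar>E - Z\<bar> < \<eta>"
    and "\<eta> \<le> Z / 2"
  shows "\<bar>e / E - \<beta> / Z\<bar> \<le> 4 * \<eta> / Z"
proof -
  have "Z / 2 < E" and "0 \<le> \<eta>"
    using e E \<open>\<eta> \<le> Z / 2\<close> by linarith+
  then have "0 < E"
    using \<open>0 < Z\<close> by linarith
  have "\<bar>(e - \<beta>) * Z + \<beta> * (Z - E)\<bar> \<le> \<bar>e - \<beta>\<bar> * Z + \<beta> * \<bar>Z - E\<bar>"
    using \<open>0 < Z\<close> \<open>0 \<le> \<beta>\<close> by (metis abs_mult abs_of_nonneg abs_triangle_ineq less_imp_le)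
  also have "\<dots> \<le> \<eta> * Z + Z * \<eta>"
    using e E \<open>0 < Z\<close> \<open>0 \<le> \<beta>\<close> \<open>\<beta> \<le> Z\<close> by (intro add_mono mult_mono) (auto simp: abs_minus_commute)
  finally have numerator: "\<bar>(e - \<beta>) * Z + \<beta> * (Z - E)\<bar> \<le> 2 * \<eta> * Z"
    by (simp add: mult_ac)
  have "\<bar>e / E - \<beta> / Z\<bar> = \<bar>(e - \<beta>) * Z + \<beta> * (Z - E)\<bar> / (E * Z)"
    using \<open>0 < E\<close> \<open>0 < Z\<close> by (simp add: field_simps abs_div)
  also have "\<dots> \<le> 2 * \<eta> * Z / (E * Z)"
    using numerator \<open>0 < E\<close> \<open>0 < Z\<close> by (intro divide_right_mono) auto
  also have "\<dots> = 2 * \<eta> / E"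
    using \<open>0 < Z\<close> by simp
  also have "\<dots> \<le> 2 * \<eta> / (Z / 2)"
    using \<open>Z / 2 < E\<close> \<open>0 < Z\<close> \<open>0 \<le> \<eta>\<close> by (intro divide_left_mono) auto
  finally show ?thesis
    by simp
qed

lemma (in prob_space) nn_integral_le_prob_add:
  fixes F :: "'a \<Rightarrow> real"
  assumes "B \<in> events" and le_1: "\<And>x. x \<in> space M \<Longrightarrow> F x \<le> 1"
    and outside: "AE x in M. x \<notin> B \<longrightarrow> F x \<le> r" and "0 \<le> r"
  shows "(\<integral>\<^sup>+x. ennreal (F x) \<partial>M) \<le> ennreal (prob B + r)"
proof -
  have "AE x in M. ennreal (F x) \<le> indicator B x + ennreal r"
    using outside AE_space
  proof eventually_elim
    case (elim x)
    show ?case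
    proof (cases "x \<in> B")
      case True
      have "ennreal (F x) \<le> ennreal (1 + r)"
        using le_1[OF elim(2)] \<open>0 \<le> r\<close> by (intro ennreal_leI) simp
      then show ?thesis
        using True \<open>0 \<le> r\<close> by simp
    next
      case False
      then show ?thesis
        using elim by (simp add: ennreal_leI)
    qed
  qed
  then have "(\<integral>\<^sup>+x. ennreal (F x) \<partial>M) \<le> (\<integral>\<^sup>+x. indicator B x + ennreal r \<partial>M)"
    by (rule nn_integral_mono_AE)
  also have "\<dots> = ennreal (prob B + r)"
    using \<open>B \<in> events\<close> \<open>0 \<le> r\<close> by (simp add: nn_integral_add emeasure_eq_measure prob_space)
  finally show ?thesis .
qed

lemma borel_measurable_prob_algebra_event:
  fixes L :: "'a \<times> 'b \<Rightarrow> real"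
  assumes "K \<in> measurable M (prob_algebra N)" and [measurable]: "L \<in> borel_measurable (M \<Otimes>\<^sub>M N)"
  shows "(\<lambda>x. measure (K x) {y \<in> space N. \<epsilon> < L (x, y)}) \<in> borel_measurable M"
proof -
  have "Sigma (space M) (\<lambda>x. {y \<in> space N. \<epsilon> < L (x, y)}) = {p \<in> space (M \<Otimes>\<^sub>M N). \<epsilon> < L p}"
    by (auto simp: space_pair_measure)
  also have "\<dots> \<in> sets (M \<Otimes>\<^sub>M N)"
    by measurable
  finally show ?thesis
    using assms(1) by (rule measure_measurable_prob_algebra2)
qed

lemma (in transition_kernel) borel_measurable_L1_Astar_emp:
  assumes [measurable]: "G \<in> borel_measurable \<mu>"
  shows "(\<lambda>p. \<integral>y. \<bar>Astar_emp a N (fst p) (snd p) y - G y\<bar> \<partial>\<mu>)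
    \<in> borel_measurable (sample_law \<mu> h N \<Otimes>\<^sub>M mult_space N)"
proof -
  let ?Q = "(sample_law \<mu> h N \<Otimes>\<^sub>M mult_space N) \<Otimes>\<^sub>M \<mu>"
  have [measurable]: "(\<lambda>q. \<Sum>i<N. real (snd (fst q) i) * a (fst (fst q) i) (snd q)) \<in> borel_measurable ?Q"
  proof (rule borel_measurable_sum)
    fix i assume "i \<in> {..<N}"
    then have "i < N"
      by simp
    have [measurable]: "(\<lambda>q. fst (fst q) i) \<in> measurable ?Q \<mu>"
      by (rule measurable_compose[OF measurable_compose[OF measurable_fst measurable_fst]
            measurable_sample_component[OF \<open>i < N\<close>]])
    have [measurable]: "(\<lambda>q. real (snd (fst q) i)) \<in> borel_measurable ?Q"
      by (rule measurable_compose[OF measurable_compose[OF measurable_fst measurable_snd]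
            borel_measurable_multiplicity[OF \<open>i < N\<close>]])
    show "(\<lambda>q. real (snd (fst q) i) * a (fst (fst q) i) (snd q)) \<in> borel_measurable ?Q"
      by measurable
  qed
  have "(\<lambda>(p, y). \<bar>Astar_emp a N (fst p) (snd p) y - G y\<bar>) \<in> borel_measurable ?Q"
    unfolding Astar_emp_def case_prod_beta by measurable
  then show ?thesis
    by (rule borel_measurable_lebesgue_integral)
qed

lemma bdd_above_range_of_scaled:
  fixes f :: "'a \<Rightarrow> real"
  assumes "0 < Z" and "bdd_above (range (\<lambda>x. f x / Z))"
  shows "bdd_above (range f)"
proof -
  obtain U where "\<And>x. f x / Z \<le> U"
    using assms(2) by (auto simp: bdd_above_def)
  then have "f x \<le> U * Z" for x
    using \<open>0 < Z\<close> by (simp add: divide_le_eq)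
  then show ?thesis
    unfolding bdd_above_def by blast
qed

locale bayes_resampling = transition_kernel \<mu> a
  for \<mu> :: "'a measure" and a :: "'a \<Rightarrow> 'a \<Rightarrow> real" +
  fixes h b :: "'a \<Rightarrow> real" and K :: "nat \<Rightarrow> (nat \<Rightarrow> 'a) \<Rightarrow> (nat \<Rightarrow> nat) measure"
    and c1 c2 :: real
  assumes h_density: "prob_density \<mu> h"
    and b_measurable[measurable]: "b \<in> borel_measurable \<mu>"
    and b_nonneg: "\<And>x. 0 \<le> b x"
    and b_bounded: "bdd_above (range b)"
    and bh_integrable: "integrable \<mu> (\<lambda>x. b x * h x)"
    and bh_pos: "0 < (\<integral>x. b x * h x \<partial>\<mu>)"
    and K_measurable: "\<And>N. K N \<in> measurable (sample_law \<mu> h N) (prob_algebra (mult_space N))"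
    and c2_pos: "0 < c2"
    and K_props: "\<And>N. AE xs in sample_law \<mu> h N.
        (AE n in K N xs. (\<Sum>i<N. n i) = N) \<and>
        (0 < (\<Sum>k<N. b (xs k)) \<longrightarrow>
          (\<forall>J \<subseteq> {..<N}. \<forall>\<epsilon>>0.
             measure (K N xs)
               {n \<in> space (mult_space N).
                  \<bar>\<Sum>j\<in>J. real (n j) / real N - resample_prob b N xs j\<bar> > \<epsilon>}
             \<le> c1 * exp (- c2 * real N * \<epsilon>\<^sup>2)))"
begin

definition evidence :: real where
  "evidence = (\<integral>x. h x * b x \<partial>\<mu>)"

definition b_bound :: real where
  "b_bound = max 1 (SUP x. b x)"

definition error_prob :: "nat \<Rightarrow> real \<Rightarrow> (nat \<Rightarrow> 'a) \<Rightarrow> real" where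
  "error_prob N \<epsilon> xs = measure (K N xs) {n \<in> space (mult_space N).
     (\<integral>y. \<bar>Astar_emp a N xs n y - Astar \<mu> a (bayes \<mu> h b) y\<bar> \<partial>\<mu>) > \<epsilon>}"

lemma h_measurable[measurable]: "h \<in> borel_measurable \<mu>"
  using h_density by (simp add: prob_density_def)

lemma h_nonneg: "0 \<le> h x"
  using h_density by (simp add: prob_density_def)

lemma evidence_eq: "evidence = (\<integral>x. b x * h x \<partial>\<mu>)"
  unfolding evidence_def by (simp add: mult.commute)

lemma evidence_pos: "0 < evidence"
  using bh_pos by (simp add: evidence_eq)

lemma bayes_eq: "bayes \<mu> h b = (\<lambda>x. b x * h x / evidence)"
  by (simp add: fun_eq_iff bayes_def evidence_def mult.commute)

lemma posterior_density: "prob_density \<mu> (bayes \<mu> h b)"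
  using bh_integrable evidence_pos b_nonneg h_nonneg
  by (simp add: prob_density_def bayes_eq evidence_eq)

lemma b_le_bound: "b x \<le> b_bound"
  unfolding b_bound_def using cSUP_upper[OF UNIV_I b_bounded] by (simp add: le_max_iff_disj)

lemma b_bound_pos: "0 < b_bound"
  by (simp add: b_bound_def)

lemma borel_measurable_error_prob: "error_prob N \<epsilon> \<in> borel_measurable (sample_law \<mu> h N)"
proof -
  have [measurable]: "Astar \<mu> a (bayes \<mu> h b) \<in> borel_measurable \<mu>"
    unfolding Astar_def bayes_eq by measurable
  show ?thesis
    unfolding error_prob_def
    using borel_measurable_prob_algebra_event[OF K_measurable
        borel_measurable_L1_Astar_emp[of "Astar \<mu> a (bayes \<mu> h b)" N h]]
    by simp
qed

lemma prob_space_K: "xs \<in> space (sample_law \<mu> h N) \<Longrightarrow> prob_space (K N xs)"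
  using measurable_space[OF K_measurable] by (simp add: space_prob_algebra)

lemma sets_K: "xs \<in> space (sample_law \<mu> h N) \<Longrightarrow> sets (K N xs) = sets (mult_space N)"
  using measurable_space[OF K_measurable] by (simp add: space_prob_algebra)

lemma error_prob_le_1: "xs \<in> space (sample_law \<mu> h N) \<Longrightarrow> error_prob N \<epsilon> xs \<le> 1"
  unfolding error_prob_def by (simp add: prob_space.prob_le_1 prob_space_K)

end

locale partitioned_resampling =
  bayes_resampling \<mu> a h b K c1 c2 + partitioned_kernel \<mu> a M A s \<delta>
  for \<mu> :: "'a measure" and a h b K c1 c2 M A s \<delta> +
  assumes tolerance_pos: "0 < \<delta>"
    and posterior_tail: "(\<integral>x. indicator uncovered x * bayes \<mu> h b x \<partial>\<mu>) \<le> \<delta>"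
begin

definition cell_tolerance :: real where
  "cell_tolerance = \<delta> / (real M + 1)"

text \<open>Chosen so that ratio_deviation_le turns empirical means within sample_tolerance of
  their expectations into a cell ratio within cell_tolerance of the posterior cell mass.\<close>

definition sample_tolerance :: real where
  "sample_tolerance = min (evidence / 2) (cell_tolerance * evidence / 4)"

definition cell_evidence :: "nat \<Rightarrow> real" where
  "cell_evidence k = (\<integral>x. h x * (indicator (A k) x * b x) \<partial>\<mu>)"

definition typical_sample :: "nat \<Rightarrow> (nat \<Rightarrow> 'a) \<Rightarrow> bool" where
  "typical_sample N xs \<longleftrightarrow>
     \<bar>(\<Sum>i<N. b (xs i)) - real N * evidence\<bar> < real N * sample_tolerance \<and>
     (\<forall>k<M. \<bar>(\<Sum>i<N. indicator (A k) (xs i) * b (xs i)) - real N * cell_evidence k\<bar>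
        < real N * sample_tolerance)"

lemma cell_tolerance_pos: "0 < cell_tolerance"
  using tolerance_pos by (simp add: cell_tolerance_def)

lemma sample_tolerance_pos: "0 < sample_tolerance"
  using evidence_pos cell_tolerance_pos by (simp add: sample_tolerance_def)

lemma cell_evidence_nonneg: "0 \<le> cell_evidence k"
  unfolding cell_evidence_def by (intro integral_nonneg_AE AE_I2) (simp add: h_nonneg b_nonneg)

lemma cell_evidence_le: "cell_evidence k \<le> evidence"
proof -
  have "integrable \<mu> (\<lambda>x. h x * b x)"
    using bh_integrable by (simp add: mult.commute)
  moreover have "integrable \<mu> (\<lambda>x. h x * (indicator (A k) x * b x))"
    using integrable_indicator_mult[OF sets_cell bh_integrable] by (simp add: mult_ac)
  ultimately show ?thesis
    unfolding cell_evidence_def evidence_def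
    by (intro integral_mono) (auto simp: h_nonneg b_nonneg mult_left_le indicator_def)
qed

lemma posterior_cell_mass:
  "(\<integral>x. indicator (A k) x * bayes \<mu> h b x \<partial>\<mu>) = cell_evidence k / evidence"
  by (simp add: bayes_eq cell_evidence_def mult_ac)

lemma prob_atypical_sample:
  assumes "0 < N"
  shows "measure (sample_law \<mu> h N) {xs \<in> space (sample_law \<mu> h N). \<not> typical_sample N xs}
    \<le> 2 * (real M + 1) * exp (- 2 * real N * sample_tolerance\<^sup>2 / b_bound\<^sup>2)"
proof -
  interpret S: prob_space "sample_law \<mu> h N"
    by (rule prob_space_sample_law[OF h_density])
  define deviation where "deviation f = {xs \<in> space (sample_law \<mu> h N).
      real N * sample_tolerance \<le> \<bar>(\<Sum>i<N. f (xs i)) - real N * (\<integral>x. h x * f x \<partial>\<mu>)\<bar>}"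
    for f :: "'a \<Rightarrow> real"
  let ?p = "2 * exp (- 2 * real N * sample_tolerance\<^sup>2 / b_bound\<^sup>2)"
  have prob_deviation: "S.prob (deviation f) \<le> ?p"
    if "f \<in> borel_measurable \<mu>" "\<And>x. f x \<in> {0..b_bound}" for f
    unfolding deviation_def using sample_tolerance_pos
    by (intro sample_law_hoeffding[OF h_density \<open>0 < N\<close> that b_bound_pos]) simp
  have sets_deviation: "deviation f \<in> S.events" if "f \<in> borel_measurable \<mu>" for f
    unfolding deviation_def using borel_measurable_sample_sum[OF that, of N h] by measurable
  let ?cell = "\<lambda>k x. indicator (A k) x * b x"
  have "{xs \<in> space (sample_law \<mu> h N). \<not> typical_sample N xs}
      \<subseteq> deviation b \<union> (\<Union>k<M. deviation (?cell k))"
    by (auto simp: typical_sample_def deviation_def cell_evidence_def evidence_def not_less)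
  then have "S.prob {xs \<in> space (sample_law \<mu> h N). \<not> typical_sample N xs}
      \<le> S.prob (deviation b) + S.prob (\<Union>k<M. deviation (?cell k))"
    using sets_deviation by (intro order_trans[OF S.finite_measure_mono measure_Un_le]) auto
  also have "S.prob (\<Union>k<M. deviation (?cell k)) \<le> (\<Sum>k<M. S.prob (deviation (?cell k)))"
    using sets_deviation by (intro S.finite_measure_subadditive_finite) auto
  also have "\<dots> \<le> (\<Sum>k<M. ?p)"
    using b_nonneg b_le_bound b_bound_pos
    by (intro sum_mono prob_deviation) (auto simp: indicator_def less_imp_le)
  also have "S.prob (deviation b) \<le> ?p"
    using b_nonneg b_le_bound by (intro prob_deviation) auto
  finally show ?thesis
    by (simp add: algebra_simps)
qed

lemma sum_resample_prob_cell:
  "(\<Sum>j\<in>{j \<in> {..<N}. xs j \<in> A k}. real (n j) / real N - resample_prob b N xs j)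
    = (\<Sum>i<N. real (n i) / real N * indicator (A k) (xs i))
      - (\<Sum>i<N. indicator (A k) (xs i) * b (xs i)) / (\<Sum>i<N. b (xs i))"
proof -
  have restrict: "(\<Sum>j\<in>{j \<in> {..<N}. xs j \<in> A k}. F j) = (\<Sum>i<N. indicator (A k) (xs i) * F i)"
    for F :: "nat \<Rightarrow> real"
  proof -
    have "(\<Sum>i<N. indicator (A k) (xs i) * F i) = (\<Sum>i<N. if xs i \<in> A k then F i else 0)"
      by (intro sum.cong) (auto simp: indicator_def)
    also have "\<dots> = (\<Sum>j\<in>{j \<in> {..<N}. xs j \<in> A k}. F j)"
      by (rule sum.inter_filter[symmetric]) simp
    finally show ?thesis ..
  qed
  have "indicator (A k) (xs i) * (real (n i) / real N - resample_prob b N xs i)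
      = real (n i) / real N * indicator (A k) (xs i)
        - indicator (A k) (xs i) * b (xs i) / (\<Sum>i<N. b (xs i))" for i
    by (simp add: resample_prob_def algebra_simps)
  then show ?thesis
    unfolding restrict by (simp only: sum_subtractf sum_divide_distrib)
qed

lemma cell_weight_close:
  assumes "0 < N" and typical: "typical_sample N xs" and "k < M"
    and resampled: "\<bar>\<Sum>j\<in>{j \<in> {..<N}. xs j \<in> A k}. real (n j) / real N - resample_prob b N xs j\<bar>
      \<le> cell_tolerance"
  shows "\<bar>(\<Sum>i<N. real (n i) / real N * indicator (A k) (xs i))
      - (\<integral>x. indicator (A k) x * bayes \<mu> h b x \<partial>\<mu>)\<bar> \<le> 2 * cell_tolerance"
proof -
  define S where "S = (\<Sum>i<N. b (xs i))"
  define S_cell where "S_cell = (\<Sum>i<N. indicator (A k) (xs i) * b (xs i))"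
  have mean_close: "\<bar>x / real N - y\<bar> < sample_tolerance"
    if "\<bar>x - real N * y\<bar> < real N * sample_tolerance" for x y
  proof -
    have "\<bar>x / real N - y\<bar> = \<bar>x - real N * y\<bar> / real N"
      using \<open>0 < N\<close> by (simp add: field_simps abs_div)
    also have "\<dots> < real N * sample_tolerance / real N"
      using that \<open>0 < N\<close> by (intro divide_strict_right_mono) auto
    finally show ?thesis
      using \<open>0 < N\<close> by simp
  qed
  have "\<bar>(S_cell / real N) / (S / real N) - cell_evidence k / evidence\<bar> \<le> 4 * sample_tolerance / evidence"
    using typical \<open>k < M\<close> evidence_pos cell_evidence_nonneg cell_evidence_le
    by (intro ratio_deviation_le mean_close)
      (auto simp: typical_sample_def S_def S_cell_def sample_tolerance_def)
  also have "\<dots> \<le> cell_tolerance"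
    using evidence_pos by (simp add: sample_tolerance_def divide_le_eq)
  finally have "\<bar>S_cell / S - cell_evidence k / evidence\<bar> \<le> cell_tolerance"
    using \<open>0 < N\<close> by simp
  then show ?thesis
    using resampled unfolding sum_resample_prob_cell posterior_cell_mass S_def S_cell_def
    by linarith
qed

lemma L1_error_le_of_cell_weights:
  assumes "0 < N" and "(\<Sum>i<N. n i) = N"
    and cells: "\<And>k. k < M \<Longrightarrow> \<bar>(\<Sum>i<N. real (n i) / real N * indicator (A k) (xs i))
      - (\<integral>x. indicator (A k) x * bayes \<mu> h b x \<partial>\<mu>)\<bar> \<le> 2 * cell_tolerance"
  shows "(\<integral>y. \<bar>Astar_emp a N xs n y - Astar \<mu> a (bayes \<mu> h b) y\<bar> \<partial>\<mu>) \<le> 8 * \<delta>"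
proof -
  have weights: "(\<Sum>i<N. real (n i) / real N) = 1"
    using assms by (simp add: sum_divide_distrib[symmetric] flip: of_nat_sum)
  have "Astar_emp a N xs n = (\<lambda>y. \<Sum>i<N. real (n i) / real N * a (xs i) y)"
    by (simp add: fun_eq_iff Astar_emp_def sum_distrib_left)
  then have "(\<integral>y. \<bar>Astar_emp a N xs n y - Astar \<mu> a (bayes \<mu> h b) y\<bar> \<partial>\<mu>)
      \<le> 4 * \<delta> + 2 * (\<Sum>k<M. \<bar>(\<Sum>i<N. real (n i) / real N * indicator (A k) (xs i))
        - (\<integral>x. indicator (A k) x * bayes \<mu> h b x \<partial>\<mu>)\<bar>)"
    using L1_mixture_Astar_le[OF posterior_density posterior_tail _ weights] by simp
  also have "\<dots> \<le> 4 * \<delta> + 2 * (\<Sum>k<M. 2 * cell_tolerance)"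
    using cells by (intro add_left_mono mult_left_mono sum_mono) auto
  also have "\<dots> \<le> 8 * \<delta>"
    using tolerance_pos by (simp add: cell_tolerance_def field_simps)
  finally show ?thesis .
qed

lemma error_prob_le_of_typical:
  assumes "0 < N" and typical: "typical_sample N xs" and xs: "xs \<in> space (sample_law \<mu> h N)"
    and sum_n: "AE n in K N xs. (\<Sum>i<N. n i) = N"
    and resampling: "\<And>J \<epsilon>. J \<subseteq> {..<N} \<Longrightarrow> 0 < \<epsilon> \<Longrightarrow> measure (K N xs)
        {n \<in> space (mult_space N). \<bar>\<Sum>j\<in>J. real (n j) / real N - resample_prob b N xs j\<bar> > \<epsilon>}
      \<le> c1 * exp (- c2 * real N * \<epsilon>\<^sup>2)"
  shows "error_prob N (8 * \<delta>) xs \<le> real M * \<bar>c1\<bar> * exp (- c2 * real N * cell_tolerance\<^sup>2)"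
proof -
  interpret K: prob_space "K N xs"
    by (rule prob_space_K[OF xs])
  define J where "J k = {j \<in> {..<N}. xs j \<in> A k}" for k
  have J_subset: "J k \<subseteq> {..<N}" for k
    by (auto simp: J_def)
  define bad where "bad k = {n \<in> space (mult_space N).
      cell_tolerance < \<bar>\<Sum>j\<in>J k. real (n j) / real N - resample_prob b N xs j\<bar>}" for k
  have sets_bad: "bad k \<in> K.events" for k
    unfolding bad_def sets_K[OF xs] by (rule sets_multiplicity_deviation[OF J_subset])
  have "AE n in K N xs. n \<in> {n \<in> space (mult_space N).
      (\<integral>y. \<bar>Astar_emp a N xs n y - Astar \<mu> a (bayes \<mu> h b) y\<bar> \<partial>\<mu>) > 8 * \<delta>}
    \<longrightarrow> n \<in> (\<Union>k<M. bad k)"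
    using sum_n
  proof eventually_elim
    case (elim n)
    show ?case
      using L1_error_le_of_cell_weights[OF \<open>0 < N\<close> elim cell_weight_close[OF \<open>0 < N\<close> typical]]
      by (force simp: bad_def J_def not_less)
  qed
  then have "error_prob N (8 * \<delta>) xs \<le> K.prob (\<Union>k<M. bad k)"
    unfolding error_prob_def by (rule K.finite_measure_mono_AE) (use sets_bad in auto)
  also have "\<dots> \<le> (\<Sum>k<M. K.prob (bad k))"
    using sets_bad by (intro K.finite_measure_subadditive_finite) auto
  also have "\<dots> \<le> (\<Sum>k<M. c1 * exp (- c2 * real N * cell_tolerance\<^sup>2))"
    unfolding bad_def using resampling[OF J_subset cell_tolerance_pos] by (intro sum_mono) simp
  also have "\<dots> \<le> (\<Sum>k<M. \<bar>c1\<bar> * exp (- c2 * real N * cell_tolerance\<^sup>2))"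
    by (intro sum_mono mult_right_mono) auto
  finally show ?thesis
    by (simp add: mult.assoc)
qed

lemma sum_pos_of_typical:
  assumes "0 < N" and "typical_sample N xs"
  shows "0 < (\<Sum>i<N. b (xs i))"
proof -
  have "real N * sample_tolerance \<le> real N * (evidence / 2)"
    using \<open>0 < N\<close> by (intro mult_left_mono) (auto simp: sample_tolerance_def)
  moreover have "0 < real N * evidence"
    using \<open>0 < N\<close> evidence_pos by simp
  ultimately show ?thesis
    using assms(2) unfolding typical_sample_def by linarith
qed

lemma sets_atypical_sample:
  "{xs \<in> space (sample_law \<mu> h N). \<not> typical_sample N xs} \<in> sets (sample_law \<mu> h N)"
proof -
  have [measurable]: "(\<lambda>xs. \<Sum>i<N. b (xs i)) \<in> borel_measurable (sample_law \<mu> h N)"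
    by (rule borel_measurable_sample_sum) simp
  have [measurable]: "(\<lambda>xs. \<Sum>i<N. indicator (A k) (xs i) * b (xs i)) \<in> borel_measurable (sample_law \<mu> h N)"
    for k
    by (rule borel_measurable_sample_sum) simp
  show ?thesis
    unfolding typical_sample_def by measurable
qed

lemma nn_integral_error_prob_le:
  assumes "0 < N"
  shows "(\<integral>\<^sup>+xs. ennreal (error_prob N (8 * \<delta>) xs) \<partial>sample_law \<mu> h N)
    \<le> ennreal (2 * (real M + 1) * exp (- 2 * real N * sample_tolerance\<^sup>2 / b_bound\<^sup>2)
      + real M * \<bar>c1\<bar> * exp (- c2 * real N * cell_tolerance\<^sup>2))"
proof -
  interpret S: prob_space "sample_law \<mu> h N"
    by (rule prob_space_sample_law[OF h_density])
  let ?atypical = "{xs \<in> space (sample_law \<mu> h N). \<not> typical_sample N xs}"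
  have "AE xs in sample_law \<mu> h N. xs \<notin> ?atypical
      \<longrightarrow> error_prob N (8 * \<delta>) xs \<le> real M * \<bar>c1\<bar> * exp (- c2 * real N * cell_tolerance\<^sup>2)"
    using K_props[of N] AE_space
  proof eventually_elim
    case (elim xs)
    show ?case
    proof
      assume "xs \<notin> ?atypical"
      then have "typical_sample N xs"
        using elim by simp
      then show "error_prob N (8 * \<delta>) xs \<le> real M * \<bar>c1\<bar> * exp (- c2 * real N * cell_tolerance\<^sup>2)"
        using elim sum_pos_of_typical[OF \<open>0 < N\<close>]
        by (intro error_prob_le_of_typical[OF \<open>0 < N\<close>]) auto
    qed
  qed
  then have "(\<integral>\<^sup>+xs. ennreal (error_prob N (8 * \<delta>) xs) \<partial>sample_law \<mu> h N)
      \<le> ennreal (S.prob ?atypical + real M * \<bar>c1\<bar> * exp (- c2 * real N * cell_tolerance\<^sup>2))"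
    by (intro S.nn_integral_le_prob_add sets_atypical_sample error_prob_le_1) auto
  also have "\<dots> \<le> ennreal (2 * (real M + 1) * exp (- 2 * real N * sample_tolerance\<^sup>2 / b_bound\<^sup>2)
      + real M * \<bar>c1\<bar> * exp (- c2 * real N * cell_tolerance\<^sup>2))"
    using prob_atypical_sample[OF \<open>0 < N\<close>] by (intro ennreal_leI) simp
  finally show ?thesis .
qed

lemma error_prob_exponential_decay:
  "\<exists>C c. 0 < c \<and> (\<forall>N\<ge>1. error_prob N (8 * \<delta>) \<in> borel_measurable (sample_law \<mu> h N) \<and>
    (\<integral>\<^sup>+xs. ennreal (error_prob N (8 * \<delta>) xs) \<partial>sample_law \<mu> h N) \<le> ennreal (C * exp (- c * real N)))"
proof (intro exI conjI allI impI)
  define c where "c = min (2 * sample_tolerance\<^sup>2 / b_bound\<^sup>2) (c2 * cell_tolerance\<^sup>2)"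
  show "0 < c"
    using sample_tolerance_pos b_bound_pos c2_pos cell_tolerance_pos by (simp add: c_def)
  fix N :: nat
  assume "1 \<le> N"
  show "error_prob N (8 * \<delta>) \<in> borel_measurable (sample_law \<mu> h N)"
    by (rule borel_measurable_error_prob)
  have "c * real N \<le> 2 * sample_tolerance\<^sup>2 / b_bound\<^sup>2 * real N"
    by (intro mult_right_mono) (auto simp: c_def)
  then have "exp (- 2 * real N * sample_tolerance\<^sup>2 / b_bound\<^sup>2) \<le> exp (- c * real N)"
    by (simp add: mult_ac)
  moreover have "c * real N \<le> c2 * cell_tolerance\<^sup>2 * real N"
    by (intro mult_right_mono) (auto simp: c_def)
  then have "exp (- c2 * real N * cell_tolerance\<^sup>2) \<le> exp (- c * real N)"
    by (simp add: mult_ac)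
  ultimately have "2 * (real M + 1) * exp (- 2 * real N * sample_tolerance\<^sup>2 / b_bound\<^sup>2)
      + real M * \<bar>c1\<bar> * exp (- c2 * real N * cell_tolerance\<^sup>2)
    \<le> (2 * (real M + 1) + real M * \<bar>c1\<bar>) * exp (- c * real N)"
    by (simp add: distrib_right add_mono mult_left_mono)
  then show "(\<integral>\<^sup>+xs. ennreal (error_prob N (8 * \<delta>) xs) \<partial>sample_law \<mu> h N)
      \<le> ennreal ((2 * (real M + 1) + real M * \<bar>c1\<bar>) * exp (- c * real N))"
    using \<open>1 \<le> N\<close> by (intro order_trans[OF nn_integral_error_prob_le] ennreal_leI) simp_all
qed

end


theorem lemma9:
  fixes \<mu> :: "'a::polish_space measure"
    and a :: "'a \<Rightarrow> 'a \<Rightarrow> real"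
    and h b :: "'a \<Rightarrow> real"
    and K :: "nat \<Rightarrow> (nat \<Rightarrow> 'a) \<Rightarrow> (nat \<Rightarrow> nat) measure"
    and c1 c2 :: real
  assumes sets_mu: "sets \<mu> = sets borel"
    and sigma_fin: "sigma_finite_measure \<mu>"
    and a_td: "transition_density \<mu> a"
    and a_cont: "L1_continuous \<mu> a"
    and h_dens: "prob_density \<mu> h"
    and b_meas: "b \<in> borel_measurable \<mu>"
    and b_nonneg: "\<forall>x. 0 \<le> b x"
    and bh_int: "integrable \<mu> (\<lambda>x. b x * h x)"
    and bh_pos: "0 < (\<integral>x. b x * h x \<partial>\<mu>)"
    and b_sup: "bdd_above (range (\<lambda>x. b x / (\<integral>y. b y * h y \<partial>\<mu>)))"
    and K_kernel: "\<forall>N. K N \<in> measurable (sample_law \<mu> h N) (prob_algebra (mult_space N))"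
    and c2_pos: "0 < c2"
    and K_props: "\<forall>N. AE xs in sample_law \<mu> h N.
        (AE n in K N xs. (\<Sum>i<N. n i) = N) \<and>
        (0 < (\<Sum>k<N. b (xs k)) \<longrightarrow>
          (\<forall>J \<subseteq> {..<N}. \<forall>\<epsilon>>0.
             measure (K N xs)
               {n \<in> space (mult_space N).
                  \<bar>\<Sum>j\<in>J. real (n j) / real N - resample_prob b N xs j\<bar> > \<epsilon>}
             \<le> c1 * exp (- c2 * real N * \<epsilon>\<^sup>2)))"
  shows "\<forall>\<epsilon>>0. \<exists>C c. 0 < c \<and> (\<forall>N\<ge>1.
     (\<lambda>xs. measure (K N xs)
        {n \<in> space (mult_space N).
           (\<integral>y. \<bar>Astar_emp a N xs n y - Astar \<mu> a (bayes \<mu> h b) y\<bar> \<partial>\<mu>) > \<epsilon>})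
       \<in> borel_measurable (sample_law \<mu> h N) \<and>
     (\<integral>\<^sup>+ xs. ennreal (measure (K N xs)
        {n \<in> space (mult_space N).
           (\<integral>y. \<bar>Astar_emp a N xs n y - Astar \<mu> a (bayes \<mu> h b) y\<bar> \<partial>\<mu>) > \<epsilon>})
       \<partial>sample_law \<mu> h N)
     \<le> ennreal (C * exp (- c * real N)))"
proof -
  have kernel: "transition_kernel \<mu> a"
    by (rule transition_kernel_of_sets_borel[OF sigma_fin a_td sets_mu])
  have resampling: "bayes_resampling \<mu> a h b K c1 c2"
    using kernel h_dens b_meas b_nonneg bh_int bh_pos K_kernel c2_pos K_props
      bdd_above_range_of_scaled[OF bh_pos b_sup]
    by (intro bayes_resampling.intro bayes_resampling_axioms.intro) auto
  interpret bayes_resampling \<mu> a h b K c1 c2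
    by (rule resampling)
  have "\<exists>C c. 0 < c \<and> (\<forall>N\<ge>1. error_prob N \<epsilon> \<in> borel_measurable (sample_law \<mu> h N) \<and>
      (\<integral>\<^sup>+xs. ennreal (error_prob N \<epsilon> xs) \<partial>sample_law \<mu> h N) \<le> ennreal (C * exp (- c * real N)))"
    if "0 < \<epsilon>" for \<epsilon>
  proof -
    have "0 < \<epsilon> / 8"
      using that by simp
    then obtain M A s where partition: "partitioned_kernel \<mu> a M A s (\<epsilon> / 8)"
      and tail: "(\<integral>x. indicator (- (\<Union>k<M. A k)) x * bayes \<mu> h b x \<partial>\<mu>) \<le> \<epsilon> / 8"
      by (rule exists_kernel_partition[OF kernel sets_mu a_cont _ posterior_density])
    interpret partitioned_resampling \<mu> a h b K c1 c2 M A s "\<epsilon> / 8"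
      using resampling partition tail \<open>0 < \<epsilon> / 8\<close>
      by (intro partitioned_resampling.intro partitioned_resampling_axioms.intro)
        (simp_all add: partitioned_kernel.uncovered_def)
    show ?thesis
      using error_prob_exponential_decay by simp
  qed
  then show ?thesis
    unfolding error_prob_def[abs_def] by simp
qed

end
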